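(* Assume that $b_0 + \sum_{i \in [n]} b_i f_i(x_i) >0$ for every $x \in \mathcal{X}$. If the unary binarization formulation $\{(x,z) : Ax \geq b,\ x_i = p_{i0} + \sum_{j \in [d_i]} (p_{ij} - p_{i,j-1}) z_{ij},\ 1 \geq z_{i1} \geq z_{i2} \geq \cdots \geq z_{id_i} \geq 0,\ z_i \in \{0,1\}^{d_i} \text{ for } i \in [n]\}$ is ideal and, for $i \in [n]$, $g_i(x_i) = 0$, then a linear programming formulation of the problem $$\max \Big\{ \frac{ a_0 + \sum_{i \in [n]}a_i f_i(x_i)}{b_0 + \sum_{i \in [n]} b_i f_i(x_i)} + \sum_{i \in [n]} g_i(x_i) \ \Big|\ x \in P \cap \mathcal{X} \Big\}$$ is given as follows: $$\begin{aligned} \max \quad &a_0 \rho + \sum_{i \in [n]}a_i \mu_i \\ \text{s.t.} \quad & b_0\rho + \sum_{i \in [n]} b_i\mu_i = 1 \\ & \mu_i = f_i(p_{i0}) \cdot \rho + \sum_{j \in [d_i]} \big(f_i(p_{ij}) - f_{i}(p_{i,j-1})\big) \cdot s_{ij} && \text{for } i \in [n] \\ & \rho \geq s_{i1} \geq s_{i2} \geq \cdots \geq s_{id_i} \geq 0 && \text{for } i \in [n] \\ &A y \geq b\rho \quad \text{and} \quad y_i = p_{i0} \cdot \rho + \sum_{j \in [d_i]} (p_{ij} - p_{i,j-1}) \cdot s_{ij} && \text{for } i \in [n]. \end{aligned}$$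
   Context: Let $\mathcal{X} = \prod_{i\in[n]} \{p_{i0}, p_{i1}, \ldots, p_{id_i}\}$ with real $p_{i0} < p_{i1} < \cdots < p_{id_i}$ and positive integers $d_i$, and let $P = \{x \in \mathbb{R}^n : Ax \geq b\}$ be a polytope. Let $a_0,\dots,a_n$ be real numbers, $b_0,\dots,b_n$ nonnegative real numbers, and $f_i, g_i$ univariate functions on $\{p_{i0},\dots,p_{id_i}\}$. An MIP formulation is called ideal if every vertex of its LP relaxation (obtained by dropping integrality) has binary values for the integer-constrained variables. Here $\rho$ plays the role of $1/(b_0+\sum_i b_i f_i(x_i))$, $\mu_i$ of $f_i(x_i)\rho$, $s_{ij}$ of $z_{ij}\rho$, and $y_i$ of $x_i\rho$. *)

theory Defs
  imports Complex_Main
begin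

(* Conventions: [n] = {0..<n}; vectors in R^n are nat => real (only indices < n matter);
   variable z_{ij} is z i j for j in {1..d i}; grid points p i j for j in {0..d i};
   matrix A has m rows, A k i, right-hand side rhs k. *)

definition grid :: "nat \<Rightarrow> (nat \<Rightarrow> nat) \<Rightarrow> (nat \<Rightarrow> nat \<Rightarrow> real) \<Rightarrow> (nat \<Rightarrow> real) set" where
  "grid n d p = {x. (\<forall>i<n. \<exists>j\<le>d i. x i = p i j) \<and> (\<forall>i\<ge>n. x i = 0)}"

definition polyP :: "nat \<Rightarrow> nat \<Rightarrow> (nat \<Rightarrow> nat \<Rightarrow> real) \<Rightarrow> (nat \<Rightarrow> real) \<Rightarrow> (nat \<Rightarrow> real) set" where
  "polyP n m A rhs = {x. \<forall>k<m. (\<Sum>i<n. A k i * x i) \<ge> rhs k}"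

definition unary_relax ::
  "nat \<Rightarrow> (nat \<Rightarrow> nat) \<Rightarrow> (nat \<Rightarrow> nat \<Rightarrow> real) \<Rightarrow> nat \<Rightarrow> (nat \<Rightarrow> nat \<Rightarrow> real) \<Rightarrow> (nat \<Rightarrow> real)
   \<Rightarrow> ((nat \<Rightarrow> real) \<times> (nat \<Rightarrow> nat \<Rightarrow> real)) set" where
  "unary_relax n d p m A rhs = {(x, z).
     (\<forall>k<m. (\<Sum>i<n. A k i * x i) \<ge> rhs k) \<and>
     (\<forall>i<n. x i = p i 0 + (\<Sum>j=1..d i. (p i j - p i (j - 1)) * z i j)) \<and>
     (\<forall>i<n. 1 \<ge> z i 1 \<and> (\<forall>j. 1 \<le> j \<and> j < d i \<longrightarrow> z i j \<ge> z i (Suc j)) \<and> z i (d i) \<ge> 0) \<and>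
     (\<forall>i\<ge>n. x i = 0) \<and>
     (\<forall>i j. (i \<ge> n \<or> j = 0 \<or> j > d i) \<longrightarrow> z i j = 0)}"

definition is_vertex :: "((nat \<Rightarrow> real) \<times> (nat \<Rightarrow> nat \<Rightarrow> real)) set
     \<Rightarrow> (nat \<Rightarrow> real) \<times> (nat \<Rightarrow> nat \<Rightarrow> real) \<Rightarrow> bool" where
  "is_vertex S v \<longleftrightarrow> v \<in> S \<and>
     \<not> (\<exists>u\<in>S. \<exists>w\<in>S. \<exists>t::real. 0 < t \<and> t < 1 \<and> u \<noteq> w \<and>
          fst v = (\<lambda>i. (1 - t) * fst u i + t * fst w i) \<and>
          snd v = (\<lambda>i j. (1 - t) * snd u i j + t * snd w i j))"

definition unary_ideal ::
  "nat \<Rightarrow> (nat \<Rightarrow> nat) \<Rightarrow> (nat \<Rightarrow> nat \<Rightarrow> real) \<Rightarrow> nat \<Rightarrow> (nat \<Rightarrow> nat \<Rightarrow> real) \<Rightarrow> (nat \<Rightarrow> real) \<Rightarrow> bool" where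
  "unary_ideal n d p m A rhs \<longleftrightarrow>
     (\<forall>v. is_vertex (unary_relax n d p m A rhs) v \<longrightarrow>
        (\<forall>i<n. \<forall>j\<in>{1..d i}. snd v i j \<in> {0, 1}))"

definition lp_feasible ::
  "nat \<Rightarrow> (nat \<Rightarrow> nat) \<Rightarrow> (nat \<Rightarrow> nat \<Rightarrow> real) \<Rightarrow> nat \<Rightarrow> (nat \<Rightarrow> nat \<Rightarrow> real) \<Rightarrow> (nat \<Rightarrow> real)
   \<Rightarrow> real \<Rightarrow> (nat \<Rightarrow> real) \<Rightarrow> (nat \<Rightarrow> real \<Rightarrow> real)
   \<Rightarrow> (real \<times> (nat \<Rightarrow> real) \<times> (nat \<Rightarrow> nat \<Rightarrow> real) \<times> (nat \<Rightarrow> real)) set" where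
  "lp_feasible n d p m A rhs b0 b f = {(\<rho>, \<mu>, s, y).
     b0 * \<rho> + (\<Sum>i<n. b i * \<mu> i) = 1 \<and>
     (\<forall>i<n. \<mu> i = f i (p i 0) * \<rho> + (\<Sum>j=1..d i. (f i (p i j) - f i (p i (j - 1))) * s i j)) \<and>
     (\<forall>i<n. \<rho> \<ge> s i 1 \<and> (\<forall>j. 1 \<le> j \<and> j < d i \<longrightarrow> s i j \<ge> s i (Suc j)) \<and> s i (d i) \<ge> 0) \<and>
     (\<forall>k<m. (\<Sum>i<n. A k i * y i) \<ge> rhs k * \<rho>) \<and>
     (\<forall>i<n. y i = p i 0 * \<rho> + (\<Sum>j=1..d i. (p i j - p i (j - 1)) * s i j))}"

definition lp_obj :: "nat \<Rightarrow> real \<Rightarrow> (nat \<Rightarrow> real)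
   \<Rightarrow> real \<times> (nat \<Rightarrow> real) \<times> (nat \<Rightarrow> nat \<Rightarrow> real) \<times> (nat \<Rightarrow> real) \<Rightarrow> real" where
  "lp_obj n a0 a w = (case w of (\<rho>, \<mu>, s, y) \<Rightarrow> a0 * \<rho> + (\<Sum>i<n. a i * \<mu> i))"

definition frac_obj :: "nat \<Rightarrow> real \<Rightarrow> (nat \<Rightarrow> real) \<Rightarrow> real \<Rightarrow> (nat \<Rightarrow> real)
   \<Rightarrow> (nat \<Rightarrow> real \<Rightarrow> real) \<Rightarrow> (nat \<Rightarrow> real \<Rightarrow> real) \<Rightarrow> (nat \<Rightarrow> real) \<Rightarrow> real" where
  "frac_obj n a0 a b0 b f g x =
     (a0 + (\<Sum>i<n. a i * f i (x i))) / (b0 + (\<Sum>i<n. b i * f i (x i))) + (\<Sum>i<n. g i (x i))"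

end

theory Submission
  imports Defs "HOL-Library.Function_Algebras" "HOL-Analysis.Polytope"
begin

text \<open>The LP is the Charnes-Cooper homogenisation of the LP relaxation R of the unary
formulation: scaling by \<open>\<rho>\<close> identifies LP points with points v of R normalised by
\<open>\<rho> * den v = 1\<close> and turns the LP objective into \<open>\<rho> * num v\<close>, where num and den are the
numerator and denominator with each \<open>f\<^sub>i(x\<^sub>i)\<close> replaced by its interpolation in the unary
variables \<open>z\<^sub>i\<close>, an affine function of v. Since R is bounded, every affine function attains its
minimum over R at a vertex, and by ideality the vertices are unary codes of points of
\<open>P \<inter> \<X>\<close>, where num and den take their true values. Applied to \<open>M * den - num\<close>, with M the
best ratio on \<open>P \<inter> \<X>\<close>, this bounds the LP value by M, and the image of an optimal point of
\<open>P \<inter> \<X>\<close> attains it. That \<open>\<rho> > 0\<close> follows from den being positive at the grid point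
\<open>x\<^sub>i = p\<^sub>i\<^sub>0\<close>.\<close>

text \<open>Pointwise vector space structure on functions, so that the pairs (x, z) of the relaxation
form a real vector space and its vertices are the library's extreme points.\<close>

instantiation "fun" :: (type, real_vector) real_vector
begin
definition scaleR_fun :: "real \<Rightarrow> ('a \<Rightarrow> 'b) \<Rightarrow> 'a \<Rightarrow> 'b" where
  "scaleR_fun c f = (\<lambda>x. c *\<^sub>R f x)"
instance
  by standard (simp_all add: scaleR_fun_def fun_eq_iff scaleR_add_right scaleR_add_left)
end

lemma scaleR_fun_apply [simp]: "(c *\<^sub>R f) x = c *\<^sub>R f x"
  by (simp add: scaleR_fun_def)

lemma is_vertex_iff_extreme_point: "is_vertex S v \<longleftrightarrow> v extreme_point_of S"
proof -
  have "(fst v = (\<lambda>i. (1 - t) * fst u i + t * fst w i) \<and>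
         snd v = (\<lambda>i j. (1 - t) * snd u i j + t * snd w i j)) \<longleftrightarrow>
        v = (1 - t) *\<^sub>R u + t *\<^sub>R w" for u w :: "(nat \<Rightarrow> real) \<times> (nat \<Rightarrow> nat \<Rightarrow> real)" and t
    by (auto simp: prod_eq_iff fun_eq_iff)
  then show ?thesis
    unfolding is_vertex_def extreme_point_of_def in_segment by blast
qed

section \<open>Affine functionals and extreme points\<close>

definition affine_functional :: "('a::real_vector \<Rightarrow> real) \<Rightarrow> bool" where
  "affine_functional h \<longleftrightarrow> (\<forall>u w t. h ((1 - t) *\<^sub>R u + t *\<^sub>R w) = (1 - t) * h u + t * h w)"

lemma affine_functional_line:
  "affine_functional h \<Longrightarrow> h ((1 - r) *\<^sub>R u + r *\<^sub>R w) = h u + r * (h w - h u)"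
  unfolding affine_functional_def by (simp add: algebra_simps)

lemma affine_functional_cmult: "affine_functional h \<Longrightarrow> affine_functional (\<lambda>x. c * h x)"
  unfolding affine_functional_def by (simp add: distrib_left mult.left_commute)

lemma affine_functional_diff:
  assumes "affine_functional h" "affine_functional k"
  shows "affine_functional (\<lambda>x. h x - k x)"
proof (unfold affine_functional_def, intro allI)
  fix u w :: 'a and t :: real
  have "h ((1 - t) *\<^sub>R u + t *\<^sub>R w) = (1 - t) * h u + t * h w"
    and "k ((1 - t) *\<^sub>R u + t *\<^sub>R w) = (1 - t) * k u + t * k w"
    using assms unfolding affine_functional_def by blast+
  then show "h ((1 - t) *\<^sub>R u + t *\<^sub>R w) - k ((1 - t) *\<^sub>R u + t *\<^sub>R w) =
             (1 - t) * (h u - k u) + t * (h w - k w)"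
    by (simp only:) (simp add: algebra_simps)
qed

lemma convex_combination_pos_iff:
  fixes a b t :: real
  assumes "0 \<le> a" "0 \<le> b" "0 < t" "t < 1"
  shows "0 < a + t * (b - a) \<longleftrightarrow> a \<noteq> 0 \<or> b \<noteq> 0"
proof -
  have "a + t * (b - a) = (1 - t) * a + t * b" by (simp add: algebra_simps)
  moreover have "0 \<le> (1 - t) * a" "0 \<le> t * b" using assms by simp_all
  moreover have "0 < (1 - t) * a \<longleftrightarrow> a \<noteq> 0" "0 < t * b \<longleftrightarrow> b \<noteq> 0"
    using assms by (auto simp: zero_less_mult_iff)
  ultimately show ?thesis by linarith
qed

lemma ratio_test:
  fixes a b :: "'k \<Rightarrow> real"
  assumes "finite K" and nonneg: "\<And>k. k \<in> K \<Longrightarrow> 0 \<le> a k \<and> 0 \<le> b k"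
    and "\<exists>k\<in>K. b k < a k" and t: "0 < t" "t < 1"
  obtains s where "t \<le> s" "\<forall>k\<in>K. 0 \<le> a k + s * (b k - a k)"
    "{k\<in>K. 0 < a k + s * (b k - a k)} \<subset> {k\<in>K. 0 < a k + t * (b k - a k)}"
proof -
  define D where "D = {k\<in>K. b k < a k}"
  define ratio where "ratio k = a k / (a k - b k)" for k
  have "finite D" "D \<noteq> {}" using assms unfolding D_def by auto
  then obtain k1 where k1: "k1 \<in> D" and k1_min: "\<And>k. k \<in> D \<Longrightarrow> ratio k1 \<le> ratio k"
    using arg_min_if_finite[of D ratio] by (metis not_le)
  define s where "s = ratio k1"
  have le_ratio: "r \<le> ratio k \<longleftrightarrow> 0 \<le> a k + r * (b k - a k)" if "k \<in> D" for k r
    using that unfolding ratio_def D_def by (simp add: pos_le_divide_eq algebra_simps)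
  have pos_t: "0 < a k + t * (b k - a k) \<longleftrightarrow> a k \<noteq> 0 \<or> b k \<noteq> 0" if "k \<in> K" for k
    using convex_combination_pos_iff nonneg[OF that] t by blast
  have "t \<le> s"
    using le_ratio[OF k1] pos_t k1 unfolding s_def D_def by fastforce
  moreover have "\<forall>k\<in>K. 0 \<le> a k + s * (b k - a k)"
  proof
    fix k assume "k \<in> K"
    show "0 \<le> a k + s * (b k - a k)"
    proof (cases "k \<in> D")
      case True then show ?thesis using le_ratio k1_min s_def by blast
    next
      case False then show ?thesis using \<open>k \<in> K\<close> nonneg \<open>t \<le> s\<close> t unfolding D_def by simp
    qed
  qed
  moreover have "{k\<in>K. 0 < a k + s * (b k - a k)} \<subset> {k\<in>K. 0 < a k + t * (b k - a k)}"
  proof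
    show "{k\<in>K. 0 < a k + s * (b k - a k)} \<subseteq> {k\<in>K. 0 < a k + t * (b k - a k)}"
      using pos_t by auto
    have "k1 \<in> K" "b k1 < a k1" using k1 unfolding D_def by auto
    then have "a k1 + s * (b k1 - a k1) = 0" "0 < a k1 + t * (b k1 - a k1)"
      using pos_t nonneg unfolding s_def ratio_def by (auto simp: field_simps)
    then show "{k\<in>K. 0 < a k + s * (b k - a k)} \<noteq> {k\<in>K. 0 < a k + t * (b k - a k)}"
      using \<open>k1 \<in> K\<close> by force
  qed
  ultimately show ?thesis using that by blast
qed

lemma non_extreme_point_segment:
  fixes \<phi> :: "'a::real_vector \<Rightarrow> real"
  assumes "x \<in> S" "\<not> x extreme_point_of S"
  obtains u w t where "u \<in> S" "w \<in> S" "u \<noteq> w" "0 < t" "t < 1" "x = (1 - t) *\<^sub>R u + t *\<^sub>R w" "\<phi> w \<le> \<phi> u"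
proof -
  obtain u w t where uw: "u \<in> S" "w \<in> S" "u \<noteq> w" and t: "0 < t" "t < 1"
    and x_eq: "x = (1 - t) *\<^sub>R u + t *\<^sub>R w"
    using assms unfolding extreme_point_of_def in_segment by blast
  show ?thesis
  proof (cases "\<phi> w \<le> \<phi> u")
    case True
    then show ?thesis using that uw t x_eq by blast
  next
    case False
    have "x = (1 - (1 - t)) *\<^sub>R w + (1 - t) *\<^sub>R u"
      using x_eq by (simp add: algebra_simps)
    then show ?thesis using that[of w u "1 - t"] False uw t by auto
  qed
qed

context
  fixes E :: "'a::real_vector set" and K :: "'k set" and g :: "'k \<Rightarrow> 'a \<Rightarrow> real" and S :: "'a set"
  assumes finite_K: "finite K" and affine_E: "affine E"
    and S_eq: "S = E \<inter> {v. \<forall>k\<in>K. 0 \<le> g k v}"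
    and affine_g: "\<And>k. affine_functional (g k)"
    and ray_leaves: "\<And>u w. u \<in> S \<Longrightarrow> w \<in> S \<Longrightarrow> u \<noteq> w \<Longrightarrow> \<exists>T>1. (1 - T) *\<^sub>R u + T *\<^sub>R w \<notin> S"
    \<comment> \<open>boundedness of S, in the only form used; the space need not carry a norm\<close>
begin

lemma non_extreme_point_descent:
  assumes \<phi>: "affine_functional \<phi>" and x: "x \<in> S" "\<not> x extreme_point_of S"
  obtains y where "y \<in> S" "{k\<in>K. 0 < g k y} \<subset> {k\<in>K. 0 < g k x}" "\<phi> y \<le> \<phi> x"
proof -
  obtain u w t where uw: "u \<in> S" "w \<in> S" "u \<noteq> w" and t: "0 < t" "t < 1"
    and x_eq: "x = (1 - t) *\<^sub>R u + t *\<^sub>R w" and \<phi>_wu: "\<phi> w \<le> \<phi> u"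
    using non_extreme_point_segment[OF x] by blast
  define pt where "pt r = (1 - r) *\<^sub>R u + r *\<^sub>R w" for r
  have g_pt: "g k (pt r) = g k u + r * (g k w - g k u)" for k r
    unfolding pt_def using affine_g by (rule affine_functional_line)
  have pt_S: "pt r \<in> S \<longleftrightarrow> (\<forall>k\<in>K. 0 \<le> g k (pt r))" for r
    using uw affine_E unfolding S_eq pt_def by (auto intro: mem_affine)
  have nonneg: "0 \<le> g k u \<and> 0 \<le> g k w" if "k \<in> K" for k
    using uw that unfolding S_eq by auto
  have "\<exists>k\<in>K. g k w < g k u"
  proof (rule ccontr)
    assume "\<not> (\<exists>k\<in>K. g k w < g k u)"
    then have "pt T \<in> S" if "T > 1" for T
      using that nonneg unfolding pt_S g_pt by (simp add: not_less)
    then show False using ray_leaves[OF uw] unfolding pt_def by blast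
  qed
  then obtain s where "t \<le> s" "\<forall>k\<in>K. 0 \<le> g k u + s * (g k w - g k u)"
    "{k\<in>K. 0 < g k u + s * (g k w - g k u)} \<subset> {k\<in>K. 0 < g k u + t * (g k w - g k u)}"
    using ratio_test[of K "\<lambda>k. g k u" "\<lambda>k. g k w" t] finite_K nonneg t by blast
  moreover have x_pt: "x = pt t" unfolding x_eq pt_def ..
  ultimately have "pt s \<in> S" "{k\<in>K. 0 < g k (pt s)} \<subset> {k\<in>K. 0 < g k x}"
    unfolding x_pt pt_S g_pt by simp_all
  moreover have "\<phi> (pt s) \<le> \<phi> x"
    using \<open>t \<le> s\<close> \<phi>_wu unfolding x_eq pt_def affine_functional_line[OF \<phi>] by (simp add: mult_right_mono_neg)
  ultimately show ?thesis using that by blast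
qed

text \<open>Each descent step makes one more inequality tight, so induction on the number of slack
inequalities ends at an extreme point.\<close>

lemma ex_extreme_point_le:
  assumes \<phi>: "affine_functional \<phi>" and "x \<in> S"
  shows "\<exists>v. v extreme_point_of S \<and> \<phi> v \<le> \<phi> x"
  using \<open>x \<in> S\<close>
proof (induction "card {k\<in>K. 0 < g k x}" arbitrary: x rule: less_induct)
  case (less x)
  show ?case
  proof (cases "x extreme_point_of S")
    case False
    then obtain y where y: "y \<in> S" "{k\<in>K. 0 < g k y} \<subset> {k\<in>K. 0 < g k x}" "\<phi> y \<le> \<phi> x"
      using non_extreme_point_descent[OF \<phi> less.prems] by blast
    have "card {k\<in>K. 0 < g k y} < card {k\<in>K. 0 < g k x}"
      using y(2) finite_K by (intro psubset_card_mono) auto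
    then obtain v where "v extreme_point_of S" "\<phi> v \<le> \<phi> y" using less.hyps y(1) by blast
    then show ?thesis using y(3) by auto
  qed auto
qed

end

section \<open>Unary codes\<close>

lemma descending_chain_antimono:
  fixes z :: "nat \<Rightarrow> real"
  assumes chain: "\<forall>j. 1 \<le> j \<and> j < D \<longrightarrow> z (Suc j) \<le> z j" and "1 \<le> i" "i \<le> k" "k \<le> D"
  shows "z k \<le> z i"
  using \<open>i \<le> k\<close> \<open>k \<le> D\<close>
proof (induction k rule: dec_induct)
  case (step k)
  then have "z (Suc k) \<le> z k" using chain \<open>1 \<le> i\<close> by simp
  with step show ?case by simp
qed simp

lemma binary_descending_chain_is_step:
  fixes z :: "nat \<Rightarrow> real"
  assumes binary: "\<forall>j\<in>{1..D}. z j \<in> {0, 1}" and chain: "\<forall>j. 1 \<le> j \<and> j < D \<longrightarrow> z (Suc j) \<le> z j"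
  obtains J where "J \<le> D" "\<forall>j\<in>{1..D}. z j = (if j \<le> J then 1 else 0)"
proof -
  define J where "J = Max (insert 0 {j\<in>{1..D}. z j = 1})"
  have "J \<le> D" unfolding J_def by (subst Max_le_iff) auto
  moreover have "z j = (if j \<le> J then 1 else 0)" if j: "j \<in> {1..D}" for j
  proof (cases "j \<le> J")
    case True
    then have "J \<in> {j\<in>{1..D}. z j = 1}"
      using j Max_in[of "insert 0 {j\<in>{1..D}. z j = 1}"] unfolding J_def by fastforce
    then have "1 \<le> z j"
      using True j descending_chain_antimono[OF chain, of j J] by auto
    then show ?thesis using True j binary by force
  next
    case False
    then have "z j \<noteq> 1"
      using j Max_ge[of "insert 0 {j\<in>{1..D}. z j = 1}" j] unfolding J_def by auto
    then show ?thesis using False j binary by auto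
  qed
  ultimately show ?thesis using that by blast
qed

definition unary_interp :: "nat \<Rightarrow> (nat \<Rightarrow> real) \<Rightarrow> (nat \<Rightarrow> real) \<Rightarrow> real" where
  "unary_interp D q z = q 0 + (\<Sum>j=1..D. (q j - q (j - 1)) * z j)"

lemma unary_interp_step:
  assumes "J \<le> D" "\<forall>j\<in>{1..D}. z j = (if j \<le> J then 1 else 0)"
  shows "unary_interp D q z = q J"
proof -
  have "(\<Sum>j=1..D. (q j - q (j - 1)) * z j) = (\<Sum>j=1..J. q j - q (j - 1))"
    using assms by (intro sum.mono_neutral_cong_right) auto
  also have "\<dots> = q J - q 0"
    by (induction J) auto
  finally show ?thesis unfolding unary_interp_def by simp
qed

lemma unary_interp_scale:
  "c * unary_interp D q z = q 0 * c + (\<Sum>j=1..D. (q j - q (j - 1)) * (c * z j))"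
  unfolding unary_interp_def by (simp add: algebra_simps sum_distrib_left)

lemma unary_interp_affine:
  "u + v = 1 \<Longrightarrow> unary_interp D q (u *\<^sub>R z + v *\<^sub>R z') = u * unary_interp D q z + v * unary_interp D q z'"
proof -
  assume "u + v = 1"
  have "(\<Sum>j=1..D. (q j - q (j - 1)) * (u * z j + v * z' j)) =
        u * (\<Sum>j=1..D. (q j - q (j - 1)) * z j) + v * (\<Sum>j=1..D. (q j - q (j - 1)) * z' j)"
    by (simp add: sum.distrib sum_distrib_left distrib_left mult.left_commute)
  moreover have "q 0 = u * q 0 + v * q 0"
    using \<open>u + v = 1\<close> by (metis distrib_right mult_1)
  ultimately show ?thesis
    unfolding unary_interp_def by (simp add: distrib_left)
qed

lemma finite_grid: "finite (grid n d p)"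
proof -
  define B where "B = (\<Union>i<n. p i ` {..d i})"
  have "grid n d p \<subseteq> {x. \<forall>i. (i \<in> {..<n} \<longrightarrow> x i \<in> B) \<and> (i \<notin> {..<n} \<longrightarrow> x i = 0)}"
  proof (intro subsetI CollectI allI conjI impI)
    fix x i assume x: "x \<in> grid n d p"
    show "x i \<in> B" if "i \<in> {..<n}" using x that unfolding grid_def B_def by fastforce
    show "x i = 0" if "i \<notin> {..<n}" using x that unfolding grid_def by auto
  qed
  moreover have "finite {x. \<forall>i. (i \<in> {..<n} \<longrightarrow> x i \<in> B) \<and> (i \<notin> {..<n} \<longrightarrow> x i = 0)}"
    by (rule finite_set_of_finite_funs) (auto simp: B_def)
  ultimately show ?thesis by (rule finite_subset)
qed

section \<open>The LP relaxation of the unary formulation\<close>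

datatype relax_constraint = Row nat | Upper nat | Chain nat nat | Lower nat

locale unary_binarization =
  fixes n m :: nat and d :: "nat \<Rightarrow> nat" and p :: "nat \<Rightarrow> nat \<Rightarrow> real"
    and A :: "nat \<Rightarrow> nat \<Rightarrow> real" and rhs :: "nat \<Rightarrow> real"
begin

abbreviation relax where "relax \<equiv> unary_relax n d p m A rhs"

abbreviation feasible where "feasible \<equiv> polyP n m A rhs \<inter> grid n d p"

fun slack :: "relax_constraint \<Rightarrow> (nat \<Rightarrow> real) \<times> (nat \<Rightarrow> nat \<Rightarrow> real) \<Rightarrow> real" where
  "slack (Row k) v = (\<Sum>i<n. A k i * fst v i) - rhs k"
| "slack (Upper i) v = 1 - snd v i 1"
| "slack (Chain i j) v = snd v i j - snd v i (Suc j)"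
| "slack (Lower i) v = snd v i (d i)"

definition constraints :: "relax_constraint set" where
  "constraints = Row ` {..<m} \<union> Upper ` {..<n} \<union> case_prod Chain ` (SIGMA i:{..<n}. {1..<d i}) \<union> Lower ` {..<n}"

definition equalities :: "((nat \<Rightarrow> real) \<times> (nat \<Rightarrow> nat \<Rightarrow> real)) set" where
  "equalities = {v. (\<forall>i<n. fst v i = unary_interp (d i) (p i) (snd v i)) \<and> (\<forall>i\<ge>n. fst v i = 0) \<and>
     (\<forall>i j. n \<le> i \<or> j = 0 \<or> d i < j \<longrightarrow> snd v i j = 0)}"

lemma slack_nonneg_iff:
  "(\<forall>c\<in>constraints. 0 \<le> slack c v) \<longleftrightarrow>
     (\<forall>k<m. rhs k \<le> (\<Sum>i<n. A k i * fst v i)) \<and>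
     (\<forall>i<n. snd v i 1 \<le> 1 \<and> (\<forall>j. 1 \<le> j \<and> j < d i \<longrightarrow> snd v i (Suc j) \<le> snd v i j) \<and> 0 \<le> snd v i (d i))"
  unfolding constraints_def ball_Un Ball_image_comp by (auto simp: Ball_def)

lemma relax_eq: "relax = equalities \<inter> {v. \<forall>c\<in>constraints. 0 \<le> slack c v}"
  unfolding slack_nonneg_iff unfolding unary_relax_def equalities_def unary_interp_def
  by (auto simp: not_le)

lemma finite_constraints: "finite constraints"
  unfolding constraints_def by auto

lemma affine_equalities: "affine equalities"
proof (unfold affine_def, intro ballI allI impI)
  fix v w :: "(nat \<Rightarrow> real) \<times> (nat \<Rightarrow> nat \<Rightarrow> real)" and s t :: real
  assume "v \<in> equalities" "w \<in> equalities" "s + t = 1"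
  then show "s *\<^sub>R v + t *\<^sub>R w \<in> equalities"
    unfolding equalities_def by (auto simp: unary_interp_affine)
qed

lemma affine_functional_slack: "affine_functional (slack c)"
proof (cases c)
  case (Row k)
  have "(\<Sum>i<n. A k i * ((1 - t) * x i + t * y i)) =
        (1 - t) * (\<Sum>i<n. A k i * x i) + t * (\<Sum>i<n. A k i * y i)" for t and x y :: "nat \<Rightarrow> real"
    by (simp add: sum.distrib sum_distrib_left distrib_left mult.left_commute)
  then show ?thesis
    unfolding affine_functional_def Row
    by (simp only: slack.simps fst_add fst_scaleR plus_fun_apply scaleR_fun_apply real_scaleR_def)
       (simp add: algebra_simps)
qed (auto simp: affine_functional_def algebra_simps)

lemma relax_code_range:
  assumes "v \<in> relax"
  shows "0 \<le> snd v i j \<and> snd v i j \<le> 1"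
proof (cases "i < n \<and> j \<noteq> 0 \<and> j \<le> d i")
  case True
  have chain: "\<forall>j. 1 \<le> j \<and> j < d i \<longrightarrow> snd v i (Suc j) \<le> snd v i j"
    and "snd v i 1 \<le> 1" "0 \<le> snd v i (d i)"
    using assms True unfolding unary_relax_def by auto
  then show ?thesis
    using True descending_chain_antimono[OF chain, of 1 j] descending_chain_antimono[OF chain, of j "d i"]
    by fastforce
next
  case False
  then show ?thesis using assms unfolding unary_relax_def by auto
qed

lemma relax_ray_leaves:
  assumes u: "u \<in> relax" and w: "w \<in> relax" and "u \<noteq> w"
  shows "\<exists>T>1. (1 - T) *\<^sub>R u + T *\<^sub>R w \<notin> relax"
proof -
  have "snd u \<noteq> snd w"
  proof
    assume eq: "snd u = snd w"
    have "fst u i = fst w i" for i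
      using u w eq unfolding unary_relax_def by (cases "i < n") (auto simp: not_less)
    then show False using eq \<open>u \<noteq> w\<close> by (simp add: prod_eq_iff fun_eq_iff)
  qed
  then obtain i j where "snd u i j \<noteq> snd w i j" by (meson ext)
  define \<delta> where "\<delta> = snd w i j - snd u i j"
  define T where "T = 1 + 2 / \<bar>\<delta>\<bar>"
  have "\<delta> \<noteq> 0" using \<open>snd u i j \<noteq> snd w i j\<close> unfolding \<delta>_def by simp
  then have "T > 1" unfolding T_def by simp
  have "snd ((1 - T) *\<^sub>R u + T *\<^sub>R w) i j = snd w i j + (T - 1) * \<delta>"
    unfolding \<delta>_def by (simp add: algebra_simps)
  also have "(T - 1) * \<delta> = 2 * sgn \<delta>"
    unfolding T_def using \<open>\<delta> \<noteq> 0\<close> by (simp add: sgn_if abs_if)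
  finally have "snd ((1 - T) *\<^sub>R u + T *\<^sub>R w) i j \<notin> {0..1}"
    using relax_code_range[OF w, of i j] \<open>\<delta> \<noteq> 0\<close> by (auto simp: sgn_if)
  then show ?thesis
    using \<open>T > 1\<close> relax_code_range[of "(1 - T) *\<^sub>R u + T *\<^sub>R w" i j] by auto
qed

lemma ex_relax_vertex_le:
  assumes "affine_functional \<phi>" "v \<in> relax"
  shows "\<exists>u. is_vertex relax u \<and> \<phi> u \<le> \<phi> v"
  using ex_extreme_point_le[OF finite_constraints affine_equalities relax_eq affine_functional_slack
      relax_ray_leaves assms]
  by (simp add: is_vertex_iff_extreme_point)

text \<open>\<open>z\<^sub>i\<close> is the unary code \<open>(1,\<dots>,1,0,\<dots>,0)\<close> of the grid index of \<open>x\<^sub>i\<close>. Quantifying over q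
lets the same fact evaluate both \<open>x\<^sub>i\<close> (q the identity) and \<open>f\<^sub>i(x\<^sub>i)\<close> (q = \<open>f\<^sub>i\<close>).\<close>

definition is_unary_code :: "(nat \<Rightarrow> real) \<times> (nat \<Rightarrow> nat \<Rightarrow> real) \<Rightarrow> bool" where
  "is_unary_code v \<longleftrightarrow> (\<forall>i<n. \<forall>q. unary_interp (d i) (\<lambda>j. q (p i j)) (snd v i) = q (fst v i))"

lemma ideal_vertex_is_unary_code:
  assumes ideal: "unary_ideal n d p m A rhs" and u: "is_vertex relax u"
  shows "fst u \<in> feasible" and "is_unary_code u"
proof -
  have u_relax: "u \<in> relax" using u unfolding is_vertex_def by simp
  have step: "\<exists>J\<le>d i. \<forall>q. unary_interp (d i) q (snd u i) = q J" if i: "i < n" for i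
  proof -
    have "\<forall>j\<in>{1..d i}. snd u i j \<in> {0, 1}"
      using ideal u i unfolding unary_ideal_def by blast
    moreover have "\<forall>j. 1 \<le> j \<and> j < d i \<longrightarrow> snd u i (Suc j) \<le> snd u i j"
      using u_relax i unfolding unary_relax_def by auto
    ultimately obtain J where "J \<le> d i" "\<forall>j\<in>{1..d i}. snd u i j = (if j \<le> J then 1 else 0)"
      by (rule binary_descending_chain_is_step)
    then show ?thesis using unary_interp_step by blast
  qed
  have fst_u: "fst u i = unary_interp (d i) (p i) (snd u i)" if "i < n" for i
    using u_relax that unfolding unary_relax_def unary_interp_def by auto
  show "is_unary_code u"
  proof (unfold is_unary_code_def, intro allI impI)
    fix i q assume "i < n"
    then obtain J where "\<forall>q. unary_interp (d i) q (snd u i) = q J" using step by blast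
    then show "unary_interp (d i) (\<lambda>j. q (p i j)) (snd u i) = q (fst u i)"
      using fst_u[OF \<open>i < n\<close>] by simp
  qed
  have "\<forall>i<n. \<exists>j\<le>d i. fst u i = p i j"
    using step fst_u by metis
  then have "fst u \<in> grid n d p"
    using u_relax unfolding grid_def unary_relax_def by auto
  moreover have "fst u \<in> polyP n m A rhs"
    using u_relax unfolding unary_relax_def polyP_def by auto
  ultimately show "fst u \<in> feasible" by simp
qed

lemma feasible_has_unary_code:
  assumes x: "x \<in> feasible"
  obtains z where "(x, z) \<in> relax" and "is_unary_code (x, z)"
proof -
  have "\<forall>i<n. \<exists>j. j \<le> d i \<and> x i = p i j" using x unfolding grid_def by auto
  then obtain J where J: "\<forall>i<n. J i \<le> d i \<and> x i = p i (J i)" by metis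
  define z where "z i j = (if i < n \<and> 1 \<le> j \<and> j \<le> J i then 1 else 0 :: real)" for i j
  have interp_z: "unary_interp (d i) q (z i) = q (J i)" if "i < n" for i q
    using J that by (intro unary_interp_step) (auto simp: z_def)
  have "(x, z) \<in> relax"
    unfolding unary_relax_def
  proof (clarify, intro conjI)
    show "\<forall>k<m. rhs k \<le> (\<Sum>i<n. A k i * x i)" using x unfolding polyP_def by auto
    show "\<forall>i<n. x i = p i 0 + (\<Sum>j=1..d i. (p i j - p i (j - 1)) * z i j)"
      using interp_z J unfolding unary_interp_def by simp
    show "\<forall>i<n. z i 1 \<le> 1 \<and> (\<forall>j. 1 \<le> j \<and> j < d i \<longrightarrow> z i (Suc j) \<le> z i j) \<and> 0 \<le> z i (d i)"
      unfolding z_def by auto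
    show "\<forall>i\<ge>n. x i = 0" using x unfolding grid_def by auto
    show "\<forall>i j. n \<le> i \<or> j = 0 \<or> d i < j \<longrightarrow> z i j = 0"
      using J unfolding z_def by fastforce
  qed
  moreover have "is_unary_code (x, z)"
    unfolding is_unary_code_def using interp_z J by simp
  ultimately show ?thesis using that by blast
qed

end

section \<open>The Charnes-Cooper transformation\<close>

locale fractional_unary_program = unary_binarization +
  fixes b0 :: real and b :: "nat \<Rightarrow> real" and f :: "nat \<Rightarrow> real \<Rightarrow> real"
begin

abbreviation lp where "lp \<equiv> lp_feasible n d p m A rhs b0 b f"

definition separable_form :: "real \<Rightarrow> (nat \<Rightarrow> real) \<Rightarrow> (nat \<Rightarrow> real) \<Rightarrow> real" where
  "separable_form c0 c x = c0 + (\<Sum>i<n. c i * f i (x i))"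

definition lifted_form :: "real \<Rightarrow> (nat \<Rightarrow> real) \<Rightarrow> (nat \<Rightarrow> real) \<times> (nat \<Rightarrow> nat \<Rightarrow> real) \<Rightarrow> real" where
  "lifted_form c0 c v = c0 + (\<Sum>i<n. c i * unary_interp (d i) (\<lambda>j. f i (p i j)) (snd v i))"

lemma separable_form_cong: "(\<And>i. i < n \<Longrightarrow> x i = x' i) \<Longrightarrow> separable_form c0 c x = separable_form c0 c x'"
  unfolding separable_form_def by (metis (no_types, lifting) lessThan_iff sum.cong)

lemma lifted_form_unary_code: "is_unary_code v \<Longrightarrow> lifted_form c0 c v = separable_form c0 c (fst v)"
  unfolding is_unary_code_def lifted_form_def separable_form_def by simp

lemma affine_functional_lifted_form: "affine_functional (lifted_form c0 c)"
proof (unfold affine_functional_def, intro allI)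
  fix u w :: "(nat \<Rightarrow> real) \<times> (nat \<Rightarrow> nat \<Rightarrow> real)" and t :: real
  let ?I = "\<lambda>i v. unary_interp (d i) (\<lambda>j. f i (p i j)) (snd v i)"
  have "?I i ((1 - t) *\<^sub>R u + t *\<^sub>R w) = (1 - t) * ?I i u + t * ?I i w" for i
    by (simp add: unary_interp_affine)
  then have "(\<Sum>i<n. c i * ?I i ((1 - t) *\<^sub>R u + t *\<^sub>R w)) =
             (1 - t) * (\<Sum>i<n. c i * ?I i u) + t * (\<Sum>i<n. c i * ?I i w)"
    by (simp add: sum.distrib sum_distrib_left distrib_left mult.left_commute)
  then show "lifted_form c0 c ((1 - t) *\<^sub>R u + t *\<^sub>R w) = (1 - t) * lifted_form c0 c u + t * lifted_form c0 c w"
    unfolding lifted_form_def by (simp add: algebra_simps)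
qed

definition charnes_cooper ::
  "real \<Rightarrow> (nat \<Rightarrow> real) \<times> (nat \<Rightarrow> nat \<Rightarrow> real) \<Rightarrow> real \<times> (nat \<Rightarrow> real) \<times> (nat \<Rightarrow> nat \<Rightarrow> real) \<times> (nat \<Rightarrow> real)"
where
  "charnes_cooper \<rho> v = (\<rho>, \<lambda>i. \<rho> * unary_interp (d i) (\<lambda>j. f i (p i j)) (snd v i), \<lambda>i j. \<rho> * snd v i j, \<lambda>i. \<rho> * fst v i)"

lemma lp_obj_charnes_cooper: "lp_obj n a0 a (charnes_cooper \<rho> v) = \<rho> * lifted_form a0 a v"
  unfolding lp_obj_def charnes_cooper_def lifted_form_def
  by (simp add: algebra_simps sum_distrib_left)

lemma charnes_cooper_in_lp:
  assumes v: "v \<in> relax" and "0 < \<rho>" and normalized: "\<rho> * lifted_form b0 b v = 1"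
  shows "charnes_cooper \<rho> v \<in> lp"
proof -
  have x_v: "\<forall>i<n. fst v i = unary_interp (d i) (p i) (snd v i)"
    and rows: "\<forall>k<m. rhs k \<le> (\<Sum>i<n. A k i * fst v i)"
    and chain: "\<forall>i<n. snd v i 1 \<le> 1 \<and> (\<forall>j. 1 \<le> j \<and> j < d i \<longrightarrow> snd v i (Suc j) \<le> snd v i j) \<and> 0 \<le> snd v i (d i)"
    using v unfolding unary_relax_def unary_interp_def by auto
  have row_scaled: "rhs k * \<rho> \<le> (\<Sum>i<n. A k i * (\<rho> * fst v i))" if "k < m" for k
  proof -
    have "rhs k * \<rho> \<le> (\<Sum>i<n. A k i * fst v i) * \<rho>"
      using rows that \<open>0 < \<rho>\<close> by (simp add: mult_right_mono)
    also have "\<dots> = (\<Sum>i<n. A k i * (\<rho> * fst v i))"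
      by (simp add: sum_distrib_left sum_distrib_right mult_ac)
    finally show ?thesis .
  qed
  show ?thesis
    unfolding lp_feasible_def charnes_cooper_def
  proof (clarify, intro conjI)
    show "b0 * \<rho> + (\<Sum>i<n. b i * (\<rho> * unary_interp (d i) (\<lambda>j. f i (p i j)) (snd v i))) = 1"
      using normalized unfolding lifted_form_def by (simp add: algebra_simps sum_distrib_left)
    show "\<forall>i<n. \<rho> * unary_interp (d i) (\<lambda>j. f i (p i j)) (snd v i) =
        f i (p i 0) * \<rho> + (\<Sum>j=1..d i. (f i (p i j) - f i (p i (j - 1))) * (\<rho> * snd v i j))"
      by (simp add: unary_interp_scale)
    show "\<forall>i<n. \<rho> * snd v i 1 \<le> \<rho> \<and> (\<forall>j. 1 \<le> j \<and> j < d i \<longrightarrow> \<rho> * snd v i (Suc j) \<le> \<rho> * snd v i j) \<and>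
        0 \<le> \<rho> * snd v i (d i)"
      using chain \<open>0 < \<rho>\<close> by simp
    show "\<forall>k<m. rhs k * \<rho> \<le> (\<Sum>i<n. A k i * (\<rho> * fst v i))"
      using row_scaled by blast
    show "\<forall>i<n. \<rho> * fst v i = p i 0 * \<rho> + (\<Sum>j=1..d i. (p i j - p i (j - 1)) * (\<rho> * snd v i j))"
      using x_v by (simp add: unary_interp_scale)
  qed
qed

lemma lp_scale_pos:
  assumes w: "(\<rho>, \<mu>, s, y) \<in> lp" and base: "0 < separable_form b0 b (\<lambda>i. p i 0)"
  shows "0 < \<rho>"
proof (rule ccontr)
  assume "\<not> 0 < \<rho>"
  have normalized: "b0 * \<rho> + (\<Sum>i<n. b i * \<mu> i) = 1"
    and \<mu>_eq: "\<forall>i<n. \<mu> i = f i (p i 0) * \<rho> + (\<Sum>j=1..d i. (f i (p i j) - f i (p i (j - 1))) * s i j)"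
    and chain: "\<forall>i<n. s i 1 \<le> \<rho> \<and> (\<forall>j. 1 \<le> j \<and> j < d i \<longrightarrow> s i (Suc j) \<le> s i j) \<and> 0 \<le> s i (d i)"
    using w unfolding lp_feasible_def by auto
  have "s i j = 0" if "i < n" "j \<in> {1..d i}" for i j
    using that chain \<open>\<not> 0 < \<rho>\<close> descending_chain_antimono[of "d i" "s i" 1 j]
      descending_chain_antimono[of "d i" "s i" j "d i"]
    by fastforce
  then have "\<mu> i = f i (p i 0) * \<rho>" if "i < n" for i
    using \<mu>_eq that by simp
  then have "\<rho> * separable_form b0 b (\<lambda>i. p i 0) = 1"
    using normalized unfolding separable_form_def by (simp add: algebra_simps sum_distrib_left)
  moreover have "\<rho> * separable_form b0 b (\<lambda>i. p i 0) \<le> 0"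
    using \<open>\<not> 0 < \<rho>\<close> base by (simp add: mult_nonpos_nonneg)
  ultimately show False by simp
qed

lemma lp_descale:
  assumes w: "(\<rho>, \<mu>, s, y) \<in> lp" and "0 < \<rho>"
  obtains v where "v \<in> relax" "\<rho> * lifted_form b0 b v = 1"
    "lp_obj n a0 a (\<rho>, \<mu>, s, y) = \<rho> * lifted_form a0 a v"
proof -
  have normalized: "b0 * \<rho> + (\<Sum>i<n. b i * \<mu> i) = 1"
    and \<mu>_eq: "\<forall>i<n. \<mu> i = f i (p i 0) * \<rho> + (\<Sum>j=1..d i. (f i (p i j) - f i (p i (j - 1))) * s i j)"
    and chain: "\<forall>i<n. s i 1 \<le> \<rho> \<and> (\<forall>j. 1 \<le> j \<and> j < d i \<longrightarrow> s i (Suc j) \<le> s i j) \<and> 0 \<le> s i (d i)"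
    and rows: "\<forall>k<m. rhs k * \<rho> \<le> (\<Sum>i<n. A k i * y i)"
    and y_eq: "\<forall>i<n. y i = p i 0 * \<rho> + (\<Sum>j=1..d i. (p i j - p i (j - 1)) * s i j)"
    using w unfolding lp_feasible_def by auto
  define z where "z i j = (if i < n \<and> 1 \<le> j \<and> j \<le> d i then s i j / \<rho> else 0)" for i j
  define x where "x i = (if i < n then y i / \<rho> else 0)" for i
  have scaled: "\<rho> * unary_interp (d i) q (z i) = q 0 * \<rho> + (\<Sum>j=1..d i. (q j - q (j - 1)) * s i j)"
    if "i < n" for i q
    unfolding unary_interp_scale using that \<open>0 < \<rho>\<close> by (intro arg_cong2[where f = "(+)"] sum.cong) (auto simp: z_def)
  have \<mu>_z: "\<mu> i = \<rho> * unary_interp (d i) (\<lambda>j. f i (p i j)) (z i)" if "i < n" for i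
    using \<mu>_eq scaled that by simp
  have "(x, z) \<in> relax"
    unfolding unary_relax_def
  proof (clarify, intro conjI)
    show "\<forall>k<m. rhs k \<le> (\<Sum>i<n. A k i * x i)"
    proof (intro allI impI)
      fix k assume "k < m"
      have "(\<Sum>i<n. A k i * x i) = (\<Sum>i<n. A k i * y i) / \<rho>"
        unfolding sum_divide_distrib x_def by (intro sum.cong) auto
      then show "rhs k \<le> (\<Sum>i<n. A k i * x i)"
        using rows \<open>k < m\<close> \<open>0 < \<rho>\<close> by (simp add: pos_le_divide_eq)
    qed
    show "\<forall>i<n. x i = p i 0 + (\<Sum>j=1..d i. (p i j - p i (j - 1)) * z i j)"
      using y_eq scaled[of _ "p _"] \<open>0 < \<rho>\<close> unfolding x_def unary_interp_def
      by (auto simp: field_simps)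
    show "\<forall>i<n. z i 1 \<le> 1 \<and> (\<forall>j. 1 \<le> j \<and> j < d i \<longrightarrow> z i (Suc j) \<le> z i j) \<and> 0 \<le> z i (d i)"
      using chain \<open>0 < \<rho>\<close> unfolding z_def by (auto simp: divide_right_mono)
    show "\<forall>i\<ge>n. x i = 0" by (simp add: x_def)
    show "\<forall>i j. n \<le> i \<or> j = 0 \<or> d i < j \<longrightarrow> z i j = 0" by (auto simp: z_def)
  qed
  moreover have "\<rho> * lifted_form b0 b (x, z) = 1"
    using normalized \<mu>_z unfolding lifted_form_def by (simp add: algebra_simps sum_distrib_left mult_ac)
  moreover have "lp_obj n a0 a (\<rho>, \<mu>, s, y) = \<rho> * lifted_form a0 a (x, z)"
    using \<mu>_z unfolding lp_obj_def lifted_form_def by (simp add: algebra_simps sum_distrib_left mult_ac)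
  ultimately show ?thesis using that by blast
qed

lemma lifted_form_bound:
  assumes ideal: "unary_ideal n d p m A rhs"
    and bound: "\<forall>x\<in>feasible. separable_form a0 a x \<le> M * separable_form b0 b x"
    and v: "v \<in> relax"
  shows "lifted_form a0 a v \<le> M * lifted_form b0 b v"
proof -
  define \<phi> where "\<phi> u = M * lifted_form b0 b u - lifted_form a0 a u" for u
  have "affine_functional \<phi>"
    unfolding \<phi>_def by (intro affine_functional_diff affine_functional_cmult affine_functional_lifted_form)
  then obtain u where u: "is_vertex relax u" "\<phi> u \<le> \<phi> v"
    using ex_relax_vertex_le v by blast
  have "0 \<le> \<phi> u"
    using bound ideal_vertex_is_unary_code[OF ideal u(1)]
    unfolding \<phi>_def by (simp add: lifted_form_unary_code)
  then show ?thesis using u(2) unfolding \<phi>_def by simp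
qed

lemma lp_obj_bound:
  assumes ideal: "unary_ideal n d p m A rhs" and base: "0 < separable_form b0 b (\<lambda>i. p i 0)"
    and bound: "\<forall>x\<in>feasible. separable_form a0 a x \<le> M * separable_form b0 b x"
    and w: "w \<in> lp"
  shows "lp_obj n a0 a w \<le> M"
proof -
  obtain \<rho> \<mu> s y where w_eq: "w = (\<rho>, \<mu>, s, y)" by (cases w)
  have "0 < \<rho>" using lp_scale_pos w base unfolding w_eq by blast
  then obtain v where v: "v \<in> relax" "\<rho> * lifted_form b0 b v = 1"
    and obj: "lp_obj n a0 a w = \<rho> * lifted_form a0 a v"
    using lp_descale w unfolding w_eq by blast
  have "\<rho> * lifted_form a0 a v \<le> \<rho> * (M * lifted_form b0 b v)"
    using lifted_form_bound[OF ideal bound v(1)] \<open>0 < \<rho>\<close> by simp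
  then show ?thesis using obj v(2) by (simp add: mult.left_commute)
qed

lemma lp_nonempty_imp_feasible:
  assumes ideal: "unary_ideal n d p m A rhs" and base: "0 < separable_form b0 b (\<lambda>i. p i 0)"
    and "lp \<noteq> {}"
  shows "feasible \<noteq> {}"
proof -
  obtain \<rho> \<mu> s y where w: "(\<rho>, \<mu>, s, y) \<in> lp" using \<open>lp \<noteq> {}\<close> by auto
  then obtain v where "v \<in> relax"
    using lp_descale lp_scale_pos[OF w base] by blast
  moreover have "affine_functional (\<lambda>_. 0)"
    unfolding affine_functional_def by simp
  ultimately obtain u where "is_vertex relax u"
    using ex_relax_vertex_le by blast
  then show ?thesis using ideal_vertex_is_unary_code[OF ideal] by blast
qed

lemma lp_attains_ratio:
  assumes x: "x \<in> feasible" and pos: "0 < separable_form b0 b x"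
  shows "\<exists>w\<in>lp. lp_obj n a0 a w = separable_form a0 a x / separable_form b0 b x"
proof -
  obtain z where z: "(x, z) \<in> relax" "is_unary_code (x, z)"
    using feasible_has_unary_code[OF x] by blast
  define \<rho> where "\<rho> = 1 / separable_form b0 b x"
  have "charnes_cooper \<rho> (x, z) \<in> lp"
    using charnes_cooper_in_lp[OF z(1)] pos lifted_form_unary_code[OF z(2)] unfolding \<rho>_def by simp
  moreover have "lp_obj n a0 a (charnes_cooper \<rho> (x, z)) = separable_form a0 a x / separable_form b0 b x"
    unfolding lp_obj_charnes_cooper lifted_form_unary_code[OF z(2)] \<rho>_def by simp
  ultimately show ?thesis by blast
qed

lemma separable_form_base_pos:
  assumes denom: "\<forall>x\<in>grid n d p. 0 < separable_form b0 b x"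
  shows "0 < separable_form b0 b (\<lambda>i. p i 0)"
proof -
  have "(\<lambda>i. if i < n then p i 0 else 0) \<in> grid n d p" unfolding grid_def by auto
  moreover have "separable_form b0 b (\<lambda>i. p i 0) = separable_form b0 b (\<lambda>i. if i < n then p i 0 else 0)"
    by (rule separable_form_cong) simp
  ultimately show ?thesis using denom by simp
qed

lemma feasible_nonempty_iff_lp:
  assumes ideal: "unary_ideal n d p m A rhs" and denom: "\<forall>x\<in>grid n d p. 0 < separable_form b0 b x"
  shows "feasible \<noteq> {} \<longleftrightarrow> lp \<noteq> {}"
proof
  assume "feasible \<noteq> {}"
  then obtain x where "x \<in> feasible" by blast
  then show "lp \<noteq> {}" using lp_attains_ratio[of x 0 0] denom by auto
next
  assume "lp \<noteq> {}"
  then show "feasible \<noteq> {}" by (rule lp_nonempty_imp_feasible[OF ideal separable_form_base_pos[OF denom]])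
qed

lemma lp_optimum:
  fixes a0 :: real and a :: "nat \<Rightarrow> real"
  assumes ideal: "unary_ideal n d p m A rhs" and denom: "\<forall>x\<in>grid n d p. 0 < separable_form b0 b x"
    and "feasible \<noteq> {}"
  defines "M \<equiv> MAX x\<in>feasible. separable_form a0 a x / separable_form b0 b x"
  shows "\<exists>w\<in>lp. lp_obj n a0 a w = M \<and> (\<forall>w'\<in>lp. lp_obj n a0 a w' \<le> lp_obj n a0 a w)"
proof -
  have fin: "finite feasible" using finite_grid by blast
  have "M \<in> (\<lambda>x. separable_form a0 a x / separable_form b0 b x) ` feasible"
    unfolding M_def using fin \<open>feasible \<noteq> {}\<close> by (intro Max_in) auto
  then obtain x where x: "x \<in> feasible" "separable_form a0 a x / separable_form b0 b x = M"
    by auto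
  have "\<forall>x\<in>feasible. separable_form a0 a x \<le> M * separable_form b0 b x"
  proof
    fix x assume "x \<in> feasible"
    then have "separable_form a0 a x / separable_form b0 b x \<le> M"
      unfolding M_def using fin by (intro Max_ge) auto
    then show "separable_form a0 a x \<le> M * separable_form b0 b x"
      using denom \<open>x \<in> feasible\<close> by (simp add: pos_divide_le_eq)
  qed
  then have "\<forall>w'\<in>lp. lp_obj n a0 a w' \<le> M"
    using lp_obj_bound[OF ideal separable_form_base_pos[OF denom]] by blast
  moreover obtain w where "w \<in> lp" "lp_obj n a0 a w = M"
    using lp_attains_ratio[of x a0 a] denom x by auto
  ultimately show ?thesis by auto
qed

lemma frac_obj_on_grid:
  assumes "\<forall>i<n. \<forall>j\<le>d i. g i (p i j) = 0" and "x \<in> grid n d p"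
  shows "frac_obj n a0 a b0 b f g x = separable_form a0 a x / separable_form b0 b x"
proof -
  have "(\<Sum>i<n. g i (x i)) = 0"
    using assms unfolding grid_def by (intro sum.neutral) fastforce
  then show ?thesis unfolding frac_obj_def separable_form_def by simp
qed

end

theorem theorem2:
  fixes n m :: nat and d :: "nat \<Rightarrow> nat" and p :: "nat \<Rightarrow> nat \<Rightarrow> real"
    and A :: "nat \<Rightarrow> nat \<Rightarrow> real" and rhs :: "nat \<Rightarrow> real"
    and a0 b0 :: real and a b :: "nat \<Rightarrow> real" and f g :: "nat \<Rightarrow> real \<Rightarrow> real"
  assumes d_pos: "\<forall>i<n. d i \<ge> 1"
    and p_incr: "\<forall>i<n. \<forall>j<d i. p i j < p i (Suc j)"
    and P_bounded: "\<exists>B. \<forall>x\<in>polyP n m A rhs. \<forall>i<n. \<bar>x i\<bar> \<le> B"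
    and b_nonneg: "b0 \<ge> 0" "\<forall>i<n. b i \<ge> 0"
    and denom_pos: "\<forall>x\<in>grid n d p. b0 + (\<Sum>i<n. b i * f i (x i)) > 0"
    and ideal: "unary_ideal n d p m A rhs"
    and g_zero: "\<forall>i<n. \<forall>j\<le>d i. g i (p i j) = 0"
  shows "(polyP n m A rhs \<inter> grid n d p \<noteq> {} \<longleftrightarrow> lp_feasible n d p m A rhs b0 b f \<noteq> {}) \<and>
         (polyP n m A rhs \<inter> grid n d p \<noteq> {} \<longrightarrow>
            (\<exists>w\<in>lp_feasible n d p m A rhs b0 b f.
               lp_obj n a0 a w = Max (frac_obj n a0 a b0 b f g ` (polyP n m A rhs \<inter> grid n d p)) \<and>
               (\<forall>w'\<in>lp_feasible n d p m A rhs b0 b f. lp_obj n a0 a w' \<le> lp_obj n a0 a w)))"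
proof -
  interpret fractional_unary_program n m d p A rhs b0 b f .
  have denom: "\<forall>x\<in>grid n d p. 0 < separable_form b0 b x"
    using denom_pos unfolding separable_form_def by blast
  have "Max (frac_obj n a0 a b0 b f g ` feasible) = (MAX x\<in>feasible. separable_form a0 a x / separable_form b0 b x)"
    using frac_obj_on_grid[OF g_zero] by (intro arg_cong[where f = Max] image_cong) auto
  then show ?thesis
    using feasible_nonempty_iff_lp[OF ideal denom] lp_optimum[OF ideal denom] by simp
qed

end
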